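(* Let $q\geq 2$ be an integer, $z\geq 2$, $\beta>0$, and let $\bar\nu\in\mathcal{P}(\{1,\dots,q\})$ be a global minimizer of $\Gamma_{\beta,q,z}(\nu)=-\frac{\beta}{z}\sum_{i=1}^q\nu_i^z+\sum_{i=1}^q\nu_i\log(q\nu_i)$ whose coordinates are ordered, $\bar\nu_1\geq\bar\nu_2\geq\dots\geq\bar\nu_q$. Define $g(x):=\beta x^{z-1}-\log(qx)$ for $x\in(0,1]$ and let $\tilde u:=(\beta(z-1))^{-1/(z-1)}$ be the minimizer of $g$. Then: (i) If $\bar\nu_1\leq\tilde u$, then $\bar\nu_k=\bar\nu_1$ for all $k\in\{2,\dots,q\}$, so $\bar\nu=(\frac1q,\dots,\frac1q)^T$. (ii) If $\bar\nu_1>\tilde u$, then $\bar\nu_k\in\{\bar\nu_0,\bar\nu_1\}$ for all $k\in\{2,\dots,q\}$, where $\bar\nu_0<\bar\nu_1$ satisfies $g(\bar\nu_0)=g(\bar\nu_1)$; in this case $$\bar\nu=(\underbrace{\bar\nu_1,\dots,\bar\nu_1}_{l\text{ times}},\bar\nu_0,\dots,\bar\nu_0)^T\quad\text{with }\bar\nu_1=\frac{1-(q-l)\bar\nu_0}{l},$$ for some $1\leq l\leq q$.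
   Context: $\mathcal{P}(\{1,\dots,q\})$ denotes the set of probability vectors on $\{1,\dots,q\}$. *)

theory Defs
  imports Complex_Main
begin

text \<open>Probability vectors on {1,...,q}, represented as functions nat => real
  (only the values on {1..q} matter).\<close>
definition prob_vec :: "nat \<Rightarrow> (nat \<Rightarrow> real) \<Rightarrow> bool" where
  "prob_vec q \<nu> \<longleftrightarrow> (\<forall>i\<in>{1..q}. \<nu> i \<ge> 0) \<and> (\<Sum>i=1..q. \<nu> i) = 1"

text \<open>The free energy functional Gamma_{beta,q,z}; convention 0 log 0 = 0
  holds since ln 0 = 0 in Isabelle.\<close>
definition Gamma :: "real \<Rightarrow> nat \<Rightarrow> real \<Rightarrow> (nat \<Rightarrow> real) \<Rightarrow> real" where
  "Gamma \<beta> q z \<nu> = - (\<beta> / z) * (\<Sum>i=1..q. \<nu> i powr z)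
                     + (\<Sum>i=1..q. \<nu> i * ln (real q * \<nu> i))"

definition gfun :: "real \<Rightarrow> nat \<Rightarrow> real \<Rightarrow> real \<Rightarrow> real" where
  "gfun \<beta> q z x = \<beta> * x powr (z - 1) - ln (real q * x)"

definition u_tilde :: "real \<Rightarrow> real \<Rightarrow> real" where
  "u_tilde \<beta> z = (\<beta> * (z - 1)) powr (- 1 / (z - 1))"

end

theory Submission
  imports Defs
begin

text \<open>
  \<open>\<Gamma>\<close> is a sum \<open>\<Sum>\<^sub>i \<phi>(\<nu>\<^sub>i)\<close>, \<open>\<phi> = Gamma_summand\<close>, with \<open>\<phi>' = 1 - g\<close>. At a minimizer on the simplex, moving mass
  between two coordinates cannot lower the sum. Since \<open>\<phi>'(x) \<rightarrow> -\<infinity>\<close> as \<open>x \<rightarrow> 0\<close>, no coordinate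
  vanishes; hence the first-order condition gives \<open>g(\<nu>\<^sub>i) = g(\<nu>\<^sub>j)\<close> for all \<open>i, j\<close>. The function
  \<open>g\<close> decreases strictly on \<open>(0, u_tilde]\<close> and increases strictly on \<open>[u_tilde, \<infinity>)\<close>, so each of its values is
  attained at most twice, once on each side of \<open>u_tilde\<close>. If \<open>\<nu>\<^sub>1 \<le> u_tilde\<close> all coordinates, being at most
  \<open>\<nu>\<^sub>1\<close>, lie on the decreasing branch and coincide; otherwise they take the two values
  \<open>\<nu>\<^sub>0 < \<nu>\<^sub>1\<close>, arranged in two blocks by monotonicity.
\<close>

definition Gamma_summand :: "real \<Rightarrow> nat \<Rightarrow> real \<Rightarrow> real \<Rightarrow> real" where
  "Gamma_summand \<beta> q z x = - (\<beta> / z) * x powr z + x * ln (real q * x)"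

lemma Gamma_eq_sum_Gamma_summand: "Gamma \<beta> q z \<nu> = (\<Sum>i=1..q. Gamma_summand \<beta> q z (\<nu> i))"
  unfolding Gamma_def Gamma_summand_def by (simp only: sum.distrib sum_distrib_left)

definition simplex_minimizer :: "nat \<Rightarrow> (real \<Rightarrow> real) \<Rightarrow> (nat \<Rightarrow> real) \<Rightarrow> bool" where
  "simplex_minimizer q f \<nu> \<longleftrightarrow>
     prob_vec q \<nu> \<and> (\<forall>\<mu>. prob_vec q \<mu> \<longrightarrow> (\<Sum>k=1..q. f (\<nu> k)) \<le> (\<Sum>k=1..q. f (\<mu> k)))"

lemma sum_fun_upd2:
  fixes F :: "'a \<Rightarrow> 'b::ab_group_add"
  assumes "finite A" "i \<in> A" "j \<in> A" "i \<noteq> j"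
  shows "(\<Sum>k\<in>A. F ((f(i := a, j := b)) k)) = (\<Sum>k\<in>A. F (f k)) - F (f i) - F (f j) + F a + F b"
proof -
  have "(\<Sum>k\<in>A. F ((f(i := a, j := b)) k)) = F a + F b + (\<Sum>k\<in>A - {i} - {j}. F (f k))"
    using assms by (simp add: sum.remove[of A i] sum.remove[of "A - {i}" j])
  moreover have "(\<Sum>k\<in>A. F (f k)) = F (f i) + F (f j) + (\<Sum>k\<in>A - {i} - {j}. F (f k))"
    using assms by (simp add: sum.remove[of A i] sum.remove[of "A - {i}" j])
  ultimately show ?thesis by (simp add: algebra_simps)
qed

lemma prob_vec_transfer:
  assumes "prob_vec q \<nu>" "i \<in> {1..q}" "j \<in> {1..q}" "i \<noteq> j" "0 \<le> \<nu> i + t" "0 \<le> \<nu> j - t"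
  shows "prob_vec q (\<nu>(i := \<nu> i + t, j := \<nu> j - t))"
  using assms sum_fun_upd2[of "{1..q}" i j "\<lambda>x. x" \<nu> "\<nu> i + t" "\<nu> j - t"]
  unfolding prob_vec_def by auto

lemma prob_vec_le_1:
  assumes "prob_vec q \<nu>" "k \<in> {1..q}"
  shows "\<nu> k \<le> 1"
proof -
  have "\<nu> k \<le> (\<Sum>i=1..q. \<nu> i)"
    using assms by (intro member_le_sum) (auto simp: prob_vec_def)
  with assms(1) show ?thesis by (simp add: prob_vec_def)
qed

lemma prob_vec_ex_pos:
  assumes "prob_vec q \<nu>"
  obtains i where "i \<in> {1..q}" "0 < \<nu> i"
proof -
  have "\<not> (\<forall>i\<in>{1..q}. \<nu> i \<le> 0)"
  proof
    assume "\<forall>i\<in>{1..q}. \<nu> i \<le> 0"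
    then have "(\<Sum>i=1..q. \<nu> i) \<le> 0" by (auto intro: sum_nonpos)
    with assms show False by (simp add: prob_vec_def)
  qed
  with that show ?thesis by (meson not_le)
qed

lemma simplex_minimizer_transfer:
  assumes "simplex_minimizer q f \<nu>"
    and "i \<in> {1..q}" "j \<in> {1..q}" "i \<noteq> j" "0 \<le> \<nu> i + t" "0 \<le> \<nu> j - t"
  shows "f (\<nu> i) + f (\<nu> j) \<le> f (\<nu> i + t) + f (\<nu> j - t)"
proof -
  have "prob_vec q (\<nu>(i := \<nu> i + t, j := \<nu> j - t))"
    using assms by (intro prob_vec_transfer) (auto simp: simplex_minimizer_def)
  with assms show ?thesis
    using sum_fun_upd2[of "{1..q}" i j f \<nu> "\<nu> i + t" "\<nu> j - t"]
    unfolding simplex_minimizer_def by force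
qed

lemma simplex_minimizer_pos:
  assumes min: "simplex_minimizer q f \<nu>"
    and split: "\<And>a. 0 < a \<Longrightarrow> a \<le> 1 \<Longrightarrow> \<exists>t. 0 < t \<and> t \<le> a \<and> f t + f (a - t) < f 0 + f a"
    and k: "k \<in> {1..q}"
  shows "0 < \<nu> k"
proof (rule ccontr)
  assume "\<not> 0 < \<nu> k"
  with min k have zero: "\<nu> k = 0"
    by (auto simp: simplex_minimizer_def prob_vec_def intro: order.antisym)
  from min obtain i where i: "i \<in> {1..q}" "0 < \<nu> i"
    using prob_vec_ex_pos by (auto simp: simplex_minimizer_def)
  with min have "\<nu> i \<le> 1"
    using prob_vec_le_1 by (auto simp: simplex_minimizer_def)
  with split i obtain t where t: "0 < t" "t \<le> \<nu> i" "f t + f (\<nu> i - t) < f 0 + f (\<nu> i)"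
    by blast
  have "f (\<nu> k) + f (\<nu> i) \<le> f (\<nu> k + t) + f (\<nu> i - t)"
    using i t zero by (intro simplex_minimizer_transfer[OF min k]) auto
  with t zero show False by simp
qed

lemma simplex_minimizer_deriv_eq:
  assumes min: "simplex_minimizer q f \<nu>"
    and pos: "\<And>k. k \<in> {1..q} \<Longrightarrow> 0 < \<nu> k"
    and deriv: "\<And>x. 0 < x \<Longrightarrow> (f has_real_derivative f' x) (at x)"
    and ij: "i \<in> {1..q}" "j \<in> {1..q}"
  shows "f' (\<nu> i) = f' (\<nu> j)"
proof (cases "i = j")
  case False
  define h where "h t = f (\<nu> i + t) + f (\<nu> j - t)" for t
  have "(h has_real_derivative f' (\<nu> i) - f' (\<nu> j)) (at 0)"
    unfolding h_def using pos[OF ij(1)] pos[OF ij(2)]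
    by (auto intro!: derivative_eq_intros DERIV_chain2[where f = f, OF deriv])
  moreover have "0 < min (\<nu> i) (\<nu> j)"
    using pos ij by simp
  moreover have "\<forall>t. \<bar>0 - t\<bar> < min (\<nu> i) (\<nu> j) \<longrightarrow> h 0 \<le> h t"
    unfolding h_def using simplex_minimizer_transfer[OF min ij False] by auto
  ultimately have "f' (\<nu> i) - f' (\<nu> j) = 0"
    by (rule DERIV_local_min)
  then show ?thesis by simp
qed simp

lemma Gamma_summand_has_derivative:
  assumes "0 < x" "0 < q" "z \<noteq> 0"
  shows "(Gamma_summand \<beta> q z has_real_derivative 1 - gfun \<beta> q z x) (at x)"
proof -
  have "(Gamma_summand \<beta> q z has_real_derivative
      - (\<beta> / z) * (z * x powr (z - 1)) + (x * (1 / (real q * x) * real q) + ln (real q * x))) (at x)"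
    unfolding Gamma_summand_def[abs_def] using assms
    by (auto intro!: derivative_eq_intros)
  with assms show ?thesis by (simp add: gfun_def algebra_simps)
qed

lemma Gamma_summand_split_decreases:
  assumes "0 < \<beta>" "1 \<le> z" "0 < q" "0 < a" "a \<le> 1"
  shows "\<exists>t. 0 < t \<and> t \<le> a \<and>
    Gamma_summand \<beta> q z t + Gamma_summand \<beta> q z (a - t) < Gamma_summand \<beta> q z 0 + Gamma_summand \<beta> q z a"
proof -
  let ?f = "Gamma_summand \<beta> q z"
  \<comment> \<open>\<open>K\<close> bounds the slope \<open>1 - g\<close> from below on \<open>[a/2, a]\<close>; \<open>t\<close> is small enough that \<open>\<phi>(t) \<le> t (K - 1)\<close>.\<close>
  define K where "K = 1 - \<beta> + ln (real q * a / 2)"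
  define t where "t = min (a / 2) (exp (K - 1) / real q)"
  have t: "0 < t" "t \<le> a / 2"
    unfolding t_def using assms by (simp_all only: min.cobounded1) simp
  obtain \<xi> where \<xi>: "a - t < \<xi>" "\<xi> < a" "?f a - ?f (a - t) = t * (1 - gfun \<beta> q z \<xi>)"
    using MVT2[of "a - t" a ?f "\<lambda>x. 1 - gfun \<beta> q z x"] Gamma_summand_has_derivative t assms
    by force
  have "\<xi> powr (z - 1) \<le> 1"
    using \<xi> t assms by (intro powr_le1) auto
  then have "\<beta> * \<xi> powr (z - 1) \<le> \<beta>"
    using assms by (simp add: mult_left_le)
  moreover have "ln (real q * a / 2) \<le> ln (real q * \<xi>)"
    using \<xi> t assms by simp
  ultimately have "K \<le> 1 - gfun \<beta> q z \<xi>"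
    unfolding gfun_def K_def by linarith
  with \<xi> t have gain: "t * K \<le> ?f a - ?f (a - t)"
    by simp
  have "t \<le> exp (K - 1) / real q"
    unfolding t_def by (rule min.cobounded2)
  then have "real q * t \<le> exp (K - 1)"
    using assms by (simp add: field_simps)
  then have "ln (real q * t) \<le> K - 1"
    using t assms ln_le_cancel_iff[of "real q * t" "exp (K - 1)"] by simp
  then have "t * ln (real q * t) \<le> t * (K - 1)"
    using t by (simp add: mult_left_mono)
  moreover have "0 \<le> (\<beta> / z) * t powr z"
    using assms by simp
  ultimately have "?f t \<le> t * K - t"
    unfolding Gamma_summand_def by (simp add: algebra_simps)
  with gain t have "?f t + ?f (a - t) < ?f 0 + ?f a"
    by (simp add: Gamma_summand_def)
  with t show ?thesis
    by (intro exI[of _ t]) simp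
qed

lemma gfun_has_derivative:
  assumes "0 < x" "0 < q"
  shows "(gfun \<beta> q z has_real_derivative (\<beta> * (z - 1) * x powr (z - 1) - 1) / x) (at x)"
proof -
  have powr_eq: "x powr (z - 1 - 1) = x powr (z - 1) / x"
    using assms powr_diff[of x "z - 1" 1] by simp
  have "(gfun \<beta> q z has_real_derivative
      \<beta> * ((z - 1) * x powr (z - 1 - 1)) - 1 / (real q * x) * real q) (at x)"
    unfolding gfun_def[abs_def] using assms by (auto intro!: derivative_eq_intros)
  moreover have "\<beta> * ((z - 1) * x powr (z - 1 - 1)) - 1 / (real q * x) * real q
      = (\<beta> * (z - 1) * x powr (z - 1) - 1) / x"
    unfolding powr_eq using assms by (simp add: field_simps)
  ultimately show ?thesis
    by simp
qed

lemma u_tilde_pos: "0 < \<beta> \<Longrightarrow> 1 < z \<Longrightarrow> 0 < u_tilde \<beta> z"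
  unfolding u_tilde_def by simp

lemma gfun_deriv_numerator_eq:
  assumes "0 < \<beta>" "1 < z"
  shows "\<beta> * (z - 1) * x powr (z - 1) - 1 = \<beta> * (z - 1) * (x powr (z - 1) - u_tilde \<beta> z powr (z - 1))"
proof -
  have "u_tilde \<beta> z powr (z - 1) = (\<beta> * (z - 1)) powr (-1)"
    unfolding u_tilde_def powr_powr using assms by simp
  with assms show ?thesis
    by (simp add: powr_minus_divide right_diff_distrib)
qed

lemma gfun_continuous_on: "0 < q \<Longrightarrow> 0 < a \<Longrightarrow> continuous_on {a..b} (gfun \<beta> q z)"
  by (rule continuous_at_imp_continuous_on)
    (metis DERIV_isCont gfun_has_derivative atLeastAtMost_iff less_le_trans)

lemma gfun_strict_antimono_below_u_tilde:
  assumes "0 < \<beta>" "1 < z" "0 < q" "0 < x" "x < y" "y \<le> u_tilde \<beta> z"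
  shows "gfun \<beta> q z y < gfun \<beta> q z x"
proof (rule DERIV_neg_imp_decreasing_open[OF \<open>x < y\<close>])
  show "continuous_on {x..y} (gfun \<beta> q z)"
    using assms by (simp add: gfun_continuous_on)
  fix t assume t: "x < t" "t < y"
  with assms have "t powr (z - 1) < u_tilde \<beta> z powr (z - 1)"
    by (intro powr_less_mono2) auto
  with assms have "(\<beta> * (z - 1) * t powr (z - 1) - 1) / t < 0"
    using t by (simp add: gfun_deriv_numerator_eq divide_neg_pos mult_pos_neg)
  with gfun_has_derivative[of t q \<beta> z] t assms
  show "\<exists>D. (gfun \<beta> q z has_real_derivative D) (at t) \<and> D < 0"
    by auto
qed

lemma gfun_strict_mono_above_u_tilde:
  assumes "0 < \<beta>" "1 < z" "0 < q" "u_tilde \<beta> z \<le> x" "x < y"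
  shows "gfun \<beta> q z x < gfun \<beta> q z y"
proof (rule DERIV_pos_imp_increasing_open[OF \<open>x < y\<close>])
  have "0 < x"
    using assms u_tilde_pos by fastforce
  then show "continuous_on {x..y} (gfun \<beta> q z)"
    using assms by (simp add: gfun_continuous_on)
  fix t assume t: "x < t" "t < y"
  with assms u_tilde_pos have "u_tilde \<beta> z powr (z - 1) < t powr (z - 1)"
    by (intro powr_less_mono2) fastforce+
  with assms \<open>0 < x\<close> have "0 < (\<beta> * (z - 1) * t powr (z - 1) - 1) / t"
    using t by (simp add: gfun_deriv_numerator_eq)
  with gfun_has_derivative[of t q \<beta> z] t assms \<open>0 < x\<close>
  show "\<exists>D. (gfun \<beta> q z has_real_derivative D) (at t) \<and> 0 < D"
    by auto
qed

lemma gfun_inj_on_below_u_tilde: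
  assumes "0 < \<beta>" "1 < z" "0 < q"
  shows "inj_on (gfun \<beta> q z) {0<..u_tilde \<beta> z}"
proof (rule inj_onI, rule ccontr)
  fix x y assume xy: "x \<in> {0<..u_tilde \<beta> z}" "y \<in> {0<..u_tilde \<beta> z}"
    "gfun \<beta> q z x = gfun \<beta> q z y" "x \<noteq> y"
  then consider "x < y" | "y < x" by linarith
  then show False
    by cases (use xy gfun_strict_antimono_below_u_tilde[OF assms] in fastforce)+
qed

lemma gfun_large_near_0:
  assumes "0 < q" "0 < \<beta>" "0 < b"
  obtains x where "0 < x" "x < b" "c \<le> gfun \<beta> q z x"
proof -
  define x where "x = min (b / 2) (exp (- c) / real q)"
  have x: "0 < x" "x < b"
    unfolding x_def using assms by auto
  have "x \<le> exp (- c) / real q"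
    unfolding x_def by (rule min.cobounded2)
  then have "ln (real q * x) \<le> - c"
    using x assms ln_le_cancel_iff[of "real q * x" "exp (- c)"] by (simp add: field_simps)
  moreover have "0 \<le> \<beta> * x powr (z - 1)"
    using assms by simp
  ultimately have "c \<le> gfun \<beta> q z x"
    unfolding gfun_def by linarith
  with x that show ?thesis by blast
qed

lemma gfun_level_set_above_u_tilde:
  assumes "0 < \<beta>" "1 < z" "0 < q" "u_tilde \<beta> z < y"
  obtains x\<^sub>0 where "0 < x\<^sub>0" "x\<^sub>0 < u_tilde \<beta> z" "gfun \<beta> q z x\<^sub>0 = gfun \<beta> q z y"
    "\<And>x. 0 < x \<Longrightarrow> gfun \<beta> q z x = gfun \<beta> q z y \<Longrightarrow> x = x\<^sub>0 \<or> x = y"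
proof -
  let ?g = "gfun \<beta> q z" and ?u = "u_tilde \<beta> z"
  have u: "0 < ?u" "?g ?u < ?g y"
    using assms u_tilde_pos gfun_strict_mono_above_u_tilde by auto
  obtain x\<^sub>1 where x\<^sub>1: "0 < x\<^sub>1" "x\<^sub>1 < ?u" "?g y \<le> ?g x\<^sub>1"
    using gfun_large_near_0[OF assms(3,1) u(1)] by blast
  obtain x\<^sub>0 where x\<^sub>0: "x\<^sub>1 \<le> x\<^sub>0" "x\<^sub>0 \<le> ?u" "?g x\<^sub>0 = ?g y"
    using IVT2'[of ?g ?u "?g y" x\<^sub>1] u x\<^sub>1 gfun_continuous_on[OF assms(3) x\<^sub>1(1)] by auto
  have "x\<^sub>0 < ?u"
    using x\<^sub>0 u by (cases "x\<^sub>0 = ?u") auto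
  moreover have "x = x\<^sub>0 \<or> x = y" if "0 < x" "?g x = ?g y" for x
  proof (cases "x \<le> ?u")
    case True
    with that x\<^sub>0 x\<^sub>1 \<open>x\<^sub>0 < ?u\<close> show ?thesis
      using inj_onD[OF gfun_inj_on_below_u_tilde[OF assms(1-3)], of x x\<^sub>0] by auto
  next
    case False
    then have "?u \<le> x" "?u \<le> y"
      using assms by auto
    with that show ?thesis
      using gfun_strict_mono_above_u_tilde[OF assms(1-3), of x y] gfun_strict_mono_above_u_tilde[OF assms(1-3), of y x]
      by (cases x y rule: linorder_cases) auto
  qed
  moreover have "0 < x\<^sub>0"
    using x\<^sub>0 x\<^sub>1 by linarith
  ultimately show ?thesis
    using that x\<^sub>0 by blast
qed

lemma simplex_minimizer_GammaI:
  assumes "prob_vec q \<nu>" "\<forall>\<mu>. prob_vec q \<mu> \<longrightarrow> Gamma \<beta> q z \<nu> \<le> Gamma \<beta> q z \<mu>"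
  shows "simplex_minimizer q (Gamma_summand \<beta> q z) \<nu>"
  using assms by (simp add: simplex_minimizer_def Gamma_eq_sum_Gamma_summand)

lemma Gamma_minimizer_pos:
  assumes "0 < \<beta>" "1 < z" "0 < q" "simplex_minimizer q (Gamma_summand \<beta> q z) \<nu>" "k \<in> {1..q}"
  shows "0 < \<nu> k"
  using assms Gamma_summand_split_decreases[OF assms(1) _ assms(3)]
  by (intro simplex_minimizer_pos[OF assms(4) _ assms(5)]) auto

lemma Gamma_minimizer_gfun_eq:
  assumes "0 < \<beta>" "1 < z" "0 < q" "simplex_minimizer q (Gamma_summand \<beta> q z) \<nu>"
    and "i \<in> {1..q}" "j \<in> {1..q}"
  shows "gfun \<beta> q z (\<nu> i) = gfun \<beta> q z (\<nu> j)"
proof -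
  have "1 - gfun \<beta> q z (\<nu> i) = 1 - gfun \<beta> q z (\<nu> j)"
    using assms Gamma_minimizer_pos Gamma_summand_has_derivative
    by (intro simplex_minimizer_deriv_eq[OF assms(4)]) auto
  then show ?thesis by simp
qed

lemma antitone_two_valued_blocks:
  fixes \<nu> :: "nat \<Rightarrow> 'a::linorder"
  assumes mono: "\<forall>i j. 1 \<le> i \<and> i \<le> j \<and> j \<le> q \<longrightarrow> \<nu> j \<le> \<nu> i" and "1 \<le> q"
    and vals: "\<forall>k\<in>{1..q}. \<nu> k \<in> {a, \<nu> 1}"
  obtains l where "1 \<le> l" "l \<le> q" "\<forall>k\<in>{1..l}. \<nu> k = \<nu> 1" "\<forall>k\<in>{l<..q}. \<nu> k = a"
proof
  define S where "S = {k \<in> {1..q}. \<nu> k = \<nu> 1}"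
  define l where "l = Max S"
  have S: "finite S" "1 \<in> S"
    using \<open>1 \<le> q\<close> by (auto simp: S_def)
  then have "l \<in> S"
    unfolding l_def using Max_in by blast
  then have "\<nu> l = \<nu> 1"
    by (simp add: S_def)
  from \<open>l \<in> S\<close> show l: "1 \<le> l" "l \<le> q"
    by (auto simp: S_def)
  show "\<forall>k\<in>{1..l}. \<nu> k = \<nu> 1"
    using mono l \<open>\<nu> l = \<nu> 1\<close> by (metis atLeastAtMost_iff order.antisym order.refl order.trans)
  show "\<forall>k\<in>{l<..q}. \<nu> k = a"
  proof
    fix k assume k: "k \<in> {l<..q}"
    then have "k \<notin> S"
      using Max_ge[OF S(1), of k] unfolding l_def by auto
    with k l vals show "\<nu> k = a"
      by (auto simp: S_def)
  qed
qed

lemma sum_two_blocks: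
  fixes \<nu> :: "nat \<Rightarrow> real"
  assumes "l \<le> q" "\<forall>k\<in>{1..l}. \<nu> k = b" "\<forall>k\<in>{l<..q}. \<nu> k = a"
  shows "(\<Sum>k=1..q. \<nu> k) = real l * b + real (q - l) * a"
proof -
  have "{1..q} = {1..l} \<union> {l<..q}"
    using assms by auto
  then have "(\<Sum>k=1..q. \<nu> k) = (\<Sum>k=1..l. \<nu> k) + (\<Sum>k\<in>{l<..q}. \<nu> k)"
    by (simp only:) (rule sum.union_disjoint, auto)
  also have "\<dots> = real l * b + real (q - l) * a"
    using assms by simp
  finally show ?thesis .
qed

theorem lemma5p3:
  fixes q :: nat and z \<beta> :: real and \<nu> :: "nat \<Rightarrow> real"
  assumes "q \<ge> 2" and "z \<ge> 2" and "\<beta> > 0"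
    and "prob_vec q \<nu>"
    and "\<forall>\<mu>. prob_vec q \<mu> \<longrightarrow> Gamma \<beta> q z \<nu> \<le> Gamma \<beta> q z \<mu>"
    and "\<forall>i j. 1 \<le> i \<and> i \<le> j \<and> j \<le> q \<longrightarrow> \<nu> j \<le> \<nu> i"
  shows "(\<nu> 1 \<le> u_tilde \<beta> z \<longrightarrow>
            (\<forall>k\<in>{2..q}. \<nu> k = \<nu> 1) \<and> (\<forall>k\<in>{1..q}. \<nu> k = 1 / real q))
       \<and> (\<nu> 1 > u_tilde \<beta> z \<longrightarrow>
            (\<exists>\<nu>0. 0 < \<nu>0 \<and> \<nu>0 < \<nu> 1 \<and> gfun \<beta> q z \<nu>0 = gfun \<beta> q z (\<nu> 1)
               \<and> (\<forall>k\<in>{2..q}. \<nu> k \<in> {\<nu>0, \<nu> 1})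
               \<and> (\<exists>l::nat. 1 \<le> l \<and> l \<le> q
                    \<and> (\<forall>k\<in>{1..l}. \<nu> k = \<nu> 1)
                    \<and> (\<forall>k\<in>{l<..q}. \<nu> k = \<nu>0)
                    \<and> \<nu> 1 = (1 - real (q - l) * \<nu>0) / real l)))"
proof -
  have params: "0 < \<beta>" "1 < z" "0 < q"
    using assms(1-3) by auto
  have min: "simplex_minimizer q (Gamma_summand \<beta> q z) \<nu>"
    using assms(4,5) by (rule simplex_minimizer_GammaI)
  have pos: "0 < \<nu> k" if "k \<in> {1..q}" for k
    using Gamma_minimizer_pos[OF params min that] .
  have gfun_eq: "gfun \<beta> q z (\<nu> k) = gfun \<beta> q z (\<nu> 1)" if "k \<in> {1..q}" for k
    using Gamma_minimizer_gfun_eq[OF params min that, of 1] params(3) by simp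
  have le_first: "\<nu> k \<le> \<nu> 1" if "k \<in> {1..q}" for k
    using that assms(6) by auto
  have total: "(\<Sum>k=1..q. \<nu> k) = 1"
    using assms(4) by (simp add: prob_vec_def)
  show ?thesis
  proof (intro conjI impI)
    assume small: "\<nu> 1 \<le> u_tilde \<beta> z"
    have const: "\<nu> k = \<nu> 1" if k: "k \<in> {1..q}" for k
    proof (rule inj_onD[OF gfun_inj_on_below_u_tilde[OF params] gfun_eq[OF k]])
      show "\<nu> k \<in> {0<..u_tilde \<beta> z}" "\<nu> 1 \<in> {0<..u_tilde \<beta> z}"
        using k small pos[OF k] le_first[OF k] pos[of 1] params(3) by auto
    qed
    then show "\<forall>k\<in>{2..q}. \<nu> k = \<nu> 1"
      by (meson atLeastAtMost_iff le_trans one_le_numeral)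
    have "(\<Sum>k=1..q. \<nu> k) = (\<Sum>k=1..q. \<nu> 1)"
      by (rule sum.cong) (use const in blast)+
    with total params have "\<nu> 1 = 1 / real q"
      by (simp add: field_simps)
    with const show "\<forall>k\<in>{1..q}. \<nu> k = 1 / real q"
      by metis
  next
    assume large: "u_tilde \<beta> z < \<nu> 1"
    obtain \<nu>\<^sub>0 where \<nu>\<^sub>0: "0 < \<nu>\<^sub>0" "\<nu>\<^sub>0 < u_tilde \<beta> z" "gfun \<beta> q z \<nu>\<^sub>0 = gfun \<beta> q z (\<nu> 1)"
      and level: "\<And>x. 0 < x \<Longrightarrow> gfun \<beta> q z x = gfun \<beta> q z (\<nu> 1) \<Longrightarrow> x = \<nu>\<^sub>0 \<or> x = \<nu> 1"
      using gfun_level_set_above_u_tilde[OF params large] by blast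
    have two_valued: "\<forall>k\<in>{1..q}. \<nu> k \<in> {\<nu>\<^sub>0, \<nu> 1}"
      using level pos gfun_eq by blast
    obtain l where l: "1 \<le> l" "l \<le> q" "\<forall>k\<in>{1..l}. \<nu> k = \<nu> 1" "\<forall>k\<in>{l<..q}. \<nu> k = \<nu>\<^sub>0"
      using antitone_two_valued_blocks[OF assms(6) _ two_valued] params by auto
    have "real l * \<nu> 1 + real (q - l) * \<nu>\<^sub>0 = 1"
      using sum_two_blocks[OF l(2-4)] total by simp
    with l(1) have "\<nu> 1 = (1 - real (q - l) * \<nu>\<^sub>0) / real l"
      by (simp add: field_simps)
    moreover have "\<forall>k\<in>{2..q}. \<nu> k \<in> {\<nu>\<^sub>0, \<nu> 1}" and "\<nu>\<^sub>0 < \<nu> 1"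
      using two_valued \<nu>\<^sub>0(2) large by auto
    ultimately show "\<exists>\<nu>0. 0 < \<nu>0 \<and> \<nu>0 < \<nu> 1 \<and> gfun \<beta> q z \<nu>0 = gfun \<beta> q z (\<nu> 1)
               \<and> (\<forall>k\<in>{2..q}. \<nu> k \<in> {\<nu>0, \<nu> 1})
               \<and> (\<exists>l::nat. 1 \<le> l \<and> l \<le> q
                    \<and> (\<forall>k\<in>{1..l}. \<nu> k = \<nu> 1)
                    \<and> (\<forall>k\<in>{l<..q}. \<nu> k = \<nu>0)
                    \<and> \<nu> 1 = (1 - real (q - l) * \<nu>0) / real l)"
      using \<nu>\<^sub>0 l by blast
  qed
qed

end
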